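(* Let $B$ be any Boolean algebra, considered as a Boolean metric space with $d(x,y)=x\triangle y$. If $U,V\subset B$ and $f:U\to V$ is an isometry, then there exists $a\in B$ such that the map $F:B\to B$, $F(x)=a\triangle x$, is an isometry of $B$ extending $f$.
   Context: An isometry between Boolean metric spaces is a bijection $f$ with $d(f(x),f(y))=d(x,y)$ for all $x,y$. $\triangle$ is symmetric difference in $B$. *)

theory Defs
  imports Main
begin

definition symdiff :: "'a::boolean_algebra \<Rightarrow> 'a \<Rightarrow> 'a" (infixl "\<triangle>" 65) where
  "x \<triangle> y = sup (x - y) (y - x)"

definition bdist :: "'a::boolean_algebra \<Rightarrow> 'a \<Rightarrow> 'a" where
  "bdist x y = x \<triangle> y"

definition bool_isometry :: "('a::boolean_algebra \<Rightarrow> 'a) \<Rightarrow> 'a set \<Rightarrow> 'a set \<Rightarrow> bool" where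
  "bool_isometry f U V \<longleftrightarrow> bij_betw f U V \<and> (\<forall>x\<in>U. \<forall>y\<in>U. bdist (f x) (f y) = bdist x y)"

end

theory Submission
  imports Defs
begin

(* Every Boolean algebra B is a Boolean metric space with d(x,y) = x \<triangle> y, and
   (B, \<triangle>) is an elementary abelian 2-group with neutral element bot.  Hence
   d(a \<triangle> x, a \<triangle> y) = d(x, y), so every translation x \<mapsto> a \<triangle> x is an isometry
   of B onto itself (it is its own inverse).  Conversely, if f preserves d on a
   set U and u \<in> U, then f x \<triangle> f u = x \<triangle> u for x \<in> U, i.e.
   f x = (f u \<triangle> u) \<triangle> x: f is the restriction of the translation by f u \<triangle> u. *)

(* The symmetric difference of Defs is the one of the library locale, which
   provides associativity, commutativity and cancellation. *)
interpretation symdiff: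
  abstract_boolean_algebra_sym_diff inf sup uminus "bot :: 'a::boolean_algebra" top symdiff
  by unfold_locales (simp add: symdiff_def diff_eq inf_commute)

lemma bdist_translate:
  fixes a x y :: "'a::boolean_algebra"
  shows "bdist (a \<triangle> x) (a \<triangle> y) = bdist x y"
proof -
  have "(a \<triangle> x) \<triangle> (a \<triangle> y) = (a \<triangle> a) \<triangle> (x \<triangle> y)"
    by (simp only: symdiff.xor.assoc symdiff.xor.left_commute)
  then show ?thesis
    by (simp add: bdist_def symdiff.xor_self symdiff.xor.left_neutral)
qed

lemma translation_isometry:
  "bool_isometry (\<lambda>x. (a::'a::boolean_algebra) \<triangle> x) UNIV UNIV"
proof -
  have "(\<lambda>x. a \<triangle> x) \<circ> (\<lambda>x. a \<triangle> x) = id"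
    by (rule ext) simp
  then have "bij (\<lambda>x. a \<triangle> x)"
    by (rule o_bij) fact
  then show ?thesis
    by (simp add: bool_isometry_def bdist_translate)
qed

lemma distance_preserving_is_translation:
  fixes f :: "'a::boolean_algebra \<Rightarrow> 'a"
  assumes iso: "\<forall>x\<in>U. \<forall>y\<in>U. bdist (f x) (f y) = bdist x y"
    and u: "u \<in> U" and x: "x \<in> U"
  shows "(f u \<triangle> u) \<triangle> x = f x"
proof -
  have "f x \<triangle> f u = x \<triangle> u"
    using iso u x by (simp add: bdist_def)
  have "(f u \<triangle> u) \<triangle> x = f u \<triangle> (x \<triangle> u)"
    by (simp only: symdiff.xor.assoc symdiff.xor.commute[of u x])
  also have "\<dots> = f u \<triangle> (f x \<triangle> f u)"
    using \<open>f x \<triangle> f u = x \<triangle> u\<close> by simp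
  also have "\<dots> = f x"
    by (simp only: symdiff.xor.commute[of "f x"] symdiff.xor_left_self)
  finally show ?thesis .
qed

theorem mainTheorem14:
  fixes U V :: "'a::boolean_algebra set" and f :: "'a \<Rightarrow> 'a"
  assumes "bool_isometry f U V"
  shows "\<exists>a::'a. bool_isometry (\<lambda>x. a \<triangle> x) UNIV UNIV \<and> (\<forall>x\<in>U. a \<triangle> x = f x)"
proof (cases "U = {}")
  case True
  then show ?thesis
    using translation_isometry by blast
next
  case False
  then obtain u where "u \<in> U"
    by blast
  moreover have "\<forall>x\<in>U. \<forall>y\<in>U. bdist (f x) (f y) = bdist x y"
    using assms by (simp add: bool_isometry_def)
  ultimately have "\<forall>x\<in>U. (f u \<triangle> u) \<triangle> x = f x"
    using distance_preserving_is_translation by blast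
  then show ?thesis
    using translation_isometry by blast
qed

end
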